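(* Let $\alpha,\beta\in\mathbb{R}$ with $\alpha>1$, where $\alpha$ is irrational and of finite type, and let $k\geqslant 2$ be an integer. Then for integers $N\geqslant 3$, $$ \#\{n\leqslant N : n\in\mathcal{B}_{\alpha,\beta},\ n \text{ is } k\text{-free}\}=\alpha^{-1}\zeta(k)^{-1}N+O\!\left(\frac{N\log\log N}{\log N}\right), $$ where $\zeta$ is the Riemann zeta function and the implied constant depends only on $\alpha$.
   Context: An integer $n$ is $k$-free if $p^k\nmid n$ for every prime $p$. The non-homogeneous Beatty sequence is $\mathcal{B}_{\alpha,\beta}=\{n\in\mathbb{N} : n=\lfloor \alpha m+\beta\rfloor \text{ for some } m\in\mathbb{Z}\}$. For an irrational number $\gamma$, its type is $\tau=\sup\{t\in\mathbb{R} : \liminf_{n\to\infty} n^t \|\gamma n\| = 0\}$, where $\|x\|$ is the distance from $x$ to the nearest integer; $\gamma$ is of finite type if $\tau<\infty$. *)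

theory Defs
  imports "HOL-Analysis.Analysis" "HOL-Computational_Algebra.Primes"
begin

definition dist_int :: "real \<Rightarrow> real" where
  "dist_int x = \<bar>x - of_int (round x)\<bar>"

definition num_type :: "real \<Rightarrow> ereal" where
  "num_type \<gamma> = Sup {ereal t | t. liminf (\<lambda>n::nat. ereal (real n powr t * dist_int (\<gamma> * real n))) = 0}"

definition finite_type :: "real \<Rightarrow> bool" where
  "finite_type \<gamma> \<longleftrightarrow> \<gamma> \<notin> \<rat> \<and> num_type \<gamma> < \<infinity>"

definition beatty :: "real \<Rightarrow> real \<Rightarrow> nat set" where
  "beatty \<alpha> \<beta> = {n. n \<ge> 1 \<and> (\<exists>m::int. int n = \<lfloor>\<alpha> * of_int m + \<beta>\<rfloor>)}"

definition kfree :: "nat \<Rightarrow> nat \<Rightarrow> bool" where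
  "kfree k n \<longleftrightarrow> (\<forall>p. prime p \<longrightarrow> \<not> p ^ k dvd n)"

definition zeta_real :: "real \<Rightarrow> real" where
  "zeta_real s = (\<Sum>n. 1 / real (Suc n) powr s)"

end

theory Submission
  imports Defs
begin

text \<open>Let \<open>B\<close> be the elements \<open>n \<le> N\<close> of the Beatty sequence, i.e. the values \<open>\<lfloor>\<alpha> m + \<beta>\<rfloor>\<close> for \<open>m\<close>
  in an interval of length \<open>\<approx> N / \<alpha>\<close>; such a value is divisible by \<open>q\<close> iff the fractional part of
  \<open>(\<alpha> m + \<beta>) / q\<close> is below \<open>1 / q\<close>. Dirichlet's theorem gives a reduced approximation \<open>a / r\<close> to
  \<open>\<alpha> / q\<close> with \<open>r \<le> \<surd>N\<close>, and since \<open>\<alpha>\<close> has finite type, \<open>r \<ge> N\<^sup>\<delta>\<close> unless \<open>q\<close> is large; over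
  blocks of \<open>r\<close> consecutive \<open>m\<close> the points \<open>m \<alpha> / q\<close> are equidistributed up to \<open>O(1)\<close>, so
  \<open>#{n \<in> B. q dvd n} = N / (\<alpha> q) + O(N\<^sup>1\<^sup>-\<^sup>\<delta>)\<close> uniformly in \<open>q\<close>.

  Legendre's sieve with the \<open>k\<close>-th powers of the primes \<open>p \<le> P\<close> then costs an error \<open>2\<^sup>P N\<^sup>1\<^sup>-\<^sup>\<delta>\<close>,
  the partial Euler product \<open>\<Prod>\<^sub>p\<^sub>\<le>\<^sub>P (1 - p\<^sup>-\<^sup>k)\<close> is \<open>\<zeta>(k)\<^sup>-\<^sup>1 (1 + O(1 / P))\<close>, and at most \<open>N / P\<close>
  elements of \<open>B\<close> are divisible by \<open>p\<^sup>k\<close> for some \<open>p > P\<close>. Choosing \<open>P \<approx> (\<delta> / 2) log\<^sub>2 N\<close> gives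
  the error \<open>O(N / log N)\<close>, which is slightly stronger than the claim.\<close>

section \<open>Irrationality measure\<close>

lemma dist_int_nonneg: "dist_int x \<ge> 0"
  by (simp add: dist_int_def)

lemma dist_int_le: "dist_int x \<le> \<bar>x - of_int m\<bar>"
  unfolding dist_int_def by (rule round_diff_minimal)

lemma dist_int_mult_pos:
  assumes "\<alpha> \<notin> \<rat>" "n \<ge> 1"
  shows "dist_int (\<alpha> * real n) > 0"
proof (rule ccontr)
  assume "\<not> ?thesis"
  hence "\<alpha> * real n = of_int (round (\<alpha> * real n))"
    using dist_int_nonneg[of "\<alpha> * real n"] by (simp add: dist_int_def)
  hence "\<alpha> = of_int (round (\<alpha> * real n)) / real n"
    using assms(2) by (simp add: field_simps)
  also have "\<dots> \<in> \<rat>" by (intro Rats_divide Rats_of_int Rats_of_nat)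
  finally show False using assms(1) by simp
qed

lemma finite_type_diophantine:
  assumes "finite_type \<alpha>"
  obtains c T where "c > 0" "T \<ge> 1"
    "\<And>n::nat. n \<ge> 1 \<Longrightarrow> c \<le> real n powr T * dist_int (\<alpha> * real n)"
proof -
  have irrat: "\<alpha> \<notin> \<rat>" and "num_type \<alpha> < \<infinity>"
    using assms by (simp_all add: finite_type_def)
  then obtain T0 where T0: "num_type \<alpha> < ereal T0"
    by (cases "num_type \<alpha>") (auto intro: that[of "real_of_ereal (num_type \<alpha>) + 1"])
  let ?f = "\<lambda>n::nat. ereal (real n powr T0 * dist_int (\<alpha> * real n))"
  have "liminf ?f \<noteq> 0"
  proof
    assume "liminf ?f = 0"
    hence "ereal T0 \<le> num_type \<alpha>"
      unfolding num_type_def by (intro Sup_upper) blast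
    with T0 show False by simp
  qed
  moreover have "liminf ?f \<ge> 0"
    by (intro Liminf_bounded always_eventually) (simp add: dist_int_nonneg)
  ultimately have "0 < liminf ?f" by simp
  then obtain y where y: "0 < ereal y" "ereal y < liminf ?f"
    using ereal_dense2 by blast
  obtain n0 where n0: "\<And>n. n \<ge> n0 \<Longrightarrow> y < real n powr T0 * dist_int (\<alpha> * real n)"
    using less_LiminfD[OF y(2)] by (auto simp: eventually_sequentially)
  define T where "T = max T0 1"
  define g where "g = (\<lambda>n::nat. real n powr T * dist_int (\<alpha> * real n))"
  define c where "c = min y (Min (insert 1 (g ` {1..<n0})))"
  have "g n > 0" if "n \<ge> 1" for n
    using dist_int_mult_pos[OF irrat that] that by (simp add: g_def)
  hence "c > 0" using y by (auto simp: c_def Min_gr_iff)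
  moreover have "c \<le> g n" if "n \<ge> 1" for n
  proof (cases "n < n0")
    case True
    hence "Min (insert 1 (g ` {1..<n0})) \<le> g n" using that by (intro Min_le) auto
    thus ?thesis by (simp add: c_def)
  next
    case False
    hence "y < real n powr T0 * dist_int (\<alpha> * real n)" using n0 by simp
    also have "\<dots> \<le> g n" unfolding g_def
      using that by (intro mult_right_mono powr_mono) (auto simp: T_def dist_int_nonneg)
    finally show ?thesis by (simp add: c_def)
  qed
  ultimately show ?thesis using that[of c T] by (simp add: T_def g_def)
qed

section \<open>Fractional parts along arithmetic progressions\<close>

lemma bij_betw_affine_mod:
  fixes a k :: int and r :: nat
  assumes "r \<ge> 1" "coprime a (int r)"
  shows "bij_betw (\<lambda>i. nat ((a * int i + k) mod int r)) {..<r} {..<r}"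
proof -
  let ?f = "\<lambda>i. nat ((a * int i + k) mod int r)"
  have "inj_on ?f {..<r}"
  proof (rule inj_onI)
    fix i j assume i: "i \<in> {..<r}" and j: "j \<in> {..<r}" and "?f i = ?f j"
    hence "(a * int i + k) mod int r = (a * int j + k) mod int r"
      using assms(1) by (simp add: nat_eq_iff)
    hence "int r dvd a * (int i - int j)"
      by (simp add: mod_eq_dvd_iff algebra_simps)
    hence "int r dvd int i - int j"
      using assms(2) by (simp add: coprime_commute coprime_dvd_mult_right_iff)
    moreover have "\<bar>int i - int j\<bar> < int r" using i j by auto
    ultimately show "i = j"
      using dvd_imp_le_int[of "int i - int j" "int r"] by (cases "i = j") auto
  qed
  moreover have "?f ` {..<r} \<subseteq> {..<r}"
    using assms(1) by (auto simp: nat_less_iff)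
  ultimately have "?f ` {..<r} = {..<r}" and "inj_on ?f {..<r}"
    by (simp_all add: endo_inj_surj)
  thus ?thesis by (simp add: bij_betw_def)
qed

lemma card_Collect_bij_betw:
  assumes "bij_betw f A A"
  shows "card {i\<in>A. Q (f i)} = card {j\<in>A. Q j}"
proof -
  have "f ` {i\<in>A. Q (f i)} = {j\<in>A. Q j}"
  proof
    show "f ` {i\<in>A. Q (f i)} \<subseteq> {j\<in>A. Q j}"
      using assms by (auto simp: bij_betw_def)
    show "{j\<in>A. Q j} \<subseteq> f ` {i\<in>A. Q (f i)}"
    proof
      fix j assume j: "j \<in> {j\<in>A. Q j}"
      hence "j \<in> f ` A" using assms by (simp add: bij_betw_def)
      then obtain i where "i \<in> A" "j = f i" by blast
      thus "j \<in> f ` {i\<in>A. Q (f i)}" using j by blast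
    qed
  qed
  moreover have "{i\<in>A. Q (f i)} \<subseteq> A" by auto
  ultimately have "bij_betw f {i\<in>A. Q (f i)} {j\<in>A. Q j}"
    using bij_betw_subset[OF assms] by blast
  thus ?thesis by (rule bij_betw_same_card)
qed

lemma card_lessThan_real_less:
  "card {j\<in>{..<r}. real j < y} = min r (nat \<lceil>y\<rceil>)"
proof -
  have e: "(j < nat \<lceil>y\<rceil>) = (real j < y)" for j :: nat
  proof -
    have "(j < nat \<lceil>y\<rceil>) = (int j < \<lceil>y\<rceil>)" by (simp add: zless_nat_eq_int_zless)
    also have "\<dots> = (of_int (int j) < y)" by (rule less_ceiling_iff)
    finally show ?thesis by simp
  qed
  have "{j\<in>{..<r}. real j < y} = {..<min r (nat \<lceil>y\<rceil>)}"
  proof (rule set_eqI)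
    fix j show "j \<in> {j\<in>{..<r}. real j < y} \<longleftrightarrow> j \<in> {..<min r (nat \<lceil>y\<rceil>)}"
      using e[of j] by simp
  qed
  thus ?thesis by simp
qed

lemma frac_add_of_nat_div:
  fixes v :: real and r i :: nat
  assumes "r \<ge> 1"
  shows "frac (v + real i / real r) =
     (frac (real r * v) + real (nat ((int i + \<lfloor>real r * v\<rfloor>) mod int r))) / real r"
proof -
  define k0 where "k0 = \<lfloor>real r * v\<rfloor>"
  define s where "s = (int i + k0) mod int r"
  have s: "0 \<le> s" "s < int r" using assms by (auto simp: s_def)
  have ds: "int i + k0 = int r * ((int i + k0) div int r) + s" by (simp add: s_def)
  have fr: "real r * v = of_int k0 + frac (real r * v)" by (simp add: k0_def frac_def)
  have "v + real i / real r - (frac (real r * v) + real (nat s)) / real r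
      = (real r * v + real i - frac (real r * v) - of_int s) / real r"
    using assms s by (simp add: field_simps)
  also have "\<dots> = (of_int (int i + k0) - of_int s) / real r" using fr by simp
  also have "\<dots> = of_int ((int i + k0) div int r)"
    using assms by (subst ds) (simp add: field_simps)
  finally have "v + real i / real r - (frac (real r * v) + real (nat s)) / real r = \<dots>" .
  moreover have "0 \<le> (frac (real r * v) + real (nat s)) / real r" using s by simp
  moreover have "(frac (real r * v) + real (nat s)) / real r < 1"
    using s frac_lt_1[of "real r * v"] assms by (simp add: divide_less_eq)
  ultimately show ?thesis unfolding s_def k0_def
    by (subst frac_unique_iff) (auto simp: add.commute)
qed

lemma card_frac_grid_bounds:
  fixes v l :: real and r :: nat
  assumes "r \<ge> 1" "0 \<le> l" "l \<le> 1"
  shows "real (card {i\<in>{..<r}. frac (v + real i / real r) < l}) \<le> real r * l + 1"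
    and "real (card {i\<in>{..<r}. frac (v + real i / real r) < l}) \<ge> real r * l - 1"
proof -
  define f where "f = frac (real r * v)"
  have f: "0 \<le> f" "f < 1" by (auto simp: f_def frac_lt_1)
  let ?g = "\<lambda>i. nat ((int i + \<lfloor>real r * v\<rfloor>) mod int r)"
  have bij: "bij_betw ?g {..<r} {..<r}"
    using bij_betw_affine_mod[OF assms(1), of 1] by simp
  have "frac (v + real i / real r) < l \<longleftrightarrow> real (?g i) < real r * l - f" for i
    using frac_add_of_nat_div[OF assms(1), of v i] assms(1)
    by (simp add: f_def pos_divide_less_eq algebra_simps)
  hence "card {i\<in>{..<r}. frac (v + real i / real r) < l}
      = card {i\<in>{..<r}. real (?g i) < real r * l - f}" by simp
  also have "\<dots> = card {j\<in>{..<r}. real j < real r * l - f}"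
    by (rule card_Collect_bij_betw[OF bij])
  also have "\<dots> = min r (nat \<lceil>real r * l - f\<rceil>)" by (rule card_lessThan_real_less)
  finally have eq: "card {i\<in>{..<r}. frac (v + real i / real r) < l} = \<dots>" .
  have "real (nat \<lceil>real r * l - f\<rceil>) \<le> real r * l + 1"
    using ceiling_correct[of "real r * l - f"] f assms by (cases "\<lceil>real r * l - f\<rceil> \<le> 0") auto
  thus "real (card {i\<in>{..<r}. frac (v + real i / real r) < l}) \<le> real r * l + 1"
    unfolding eq by linarith
  have "real r * l \<le> real r" using assms by (simp add: mult_left_le)
  moreover have "real r * l - 1 \<le> real (nat \<lceil>real r * l - f\<rceil>)"
    using le_of_int_ceiling[of "real r * l - f"] f by linarith
  ultimately show "real (card {i\<in>{..<r}. frac (v + real i / real r) < l}) \<ge> real r * l - 1"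
    unfolding eq by linarith
qed

lemma frac_less_perturb_upper:
  fixes y e \<eta> l :: real
  assumes "\<bar>e\<bar> \<le> \<eta>" "frac (y + e) < l" "l + 2 * \<eta> \<le> 1"
  shows "frac (y + \<eta>) < l + 2 * \<eta>"
proof -
  define t where "t = \<lfloor>y + e\<rfloor>"
  have "of_int t \<le> y + e" "y + e - of_int t < l"
    using assms(2) by (simp_all add: t_def frac_def)
  hence "\<lfloor>y + \<eta>\<rfloor> = t" using assms(1,3) by (intro floor_unique) linarith+
  thus ?thesis using \<open>y + e - of_int t < l\<close> assms(1) by (simp add: frac_def)
qed

lemma frac_less_perturb_lower:
  fixes y e \<eta> l :: real
  assumes "\<bar>e\<bar> \<le> \<eta>" "frac (y - \<eta>) < l - 2 * \<eta>" "l \<le> 1"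
  shows "frac (y + e) < l"
proof -
  define t where "t = \<lfloor>y - \<eta>\<rfloor>"
  have "of_int t \<le> y - \<eta>" "y - \<eta> - of_int t < l - 2 * \<eta>"
    using assms(2) by (simp_all add: t_def frac_def)
  hence "\<lfloor>y + e\<rfloor> = t" using assms(1,3) by (intro floor_unique) linarith+
  thus ?thesis using \<open>y - \<eta> - of_int t < l - 2 * \<eta>\<close> assms(1) by (simp add: frac_def)
qed

text \<open>If \<open>a / r\<close> approximates \<open>\<theta>\<close> to within \<open>1 / r\<^sup>2\<close>, the points \<open>i \<theta>\<close> for \<open>i < r\<close> lie within
  \<open>1 / r\<close> of a permutation of the grid \<open>i / r\<close> modulo 1.\<close>

lemma frac_mult_rational_approx:
  fixes \<theta> x :: real and a :: int and r i :: nat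
  assumes r: "r \<ge> 1" and app: "\<bar>real r * \<theta> - of_int a\<bar> \<le> 1 / real r" and i: "i < r"
  obtains e where "\<bar>e\<bar> \<le> 1 / real r"
    "frac (x + real i * \<theta>) = frac (x + real (nat ((a * int i) mod int r)) / real r + e)"
proof
  define e where "e = real i * (real r * \<theta> - of_int a) / real r"
  have rpos: "real r > 0" using r by simp
  have "\<bar>e\<bar> = real i * \<bar>real r * \<theta> - of_int a\<bar> / real r" by (simp add: e_def abs_mult)
  also have "\<dots> \<le> real r * (1 / real r) / real r"
    using app i by (intro divide_right_mono mult_mono) auto
  also have "\<dots> = 1 / real r" using rpos by simp
  finally show "\<bar>e\<bar> \<le> 1 / real r" .
  have g: "real (nat ((a * int i) mod int r)) = of_int ((a * int i) mod int r)"
    using r by simp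
  have "of_int a * real i = real r * of_int (a * int i div int r) + of_int ((a * int i) mod int r)"
    by (metis div_mult_mod_eq mult.commute of_int_add of_int_mult of_int_of_nat_eq)
  hence decomp: "x + real i * \<theta> = x + real (nat ((a * int i) mod int r)) / real r + e
      + of_int (a * int i div int r)"
    using rpos unfolding g by (simp add: e_def field_simps)
  show "frac (x + real i * \<theta>) = frac (x + real (nat ((a * int i) mod int r)) / real r + e)"
    unfolding decomp by (rule frac_add_of_int_right)
qed

lemma card_frac_block_le:
  fixes \<theta> x l :: real and r :: nat and a :: int
  assumes r: "r \<ge> 1" and cop: "coprime a (int r)"
    and app: "\<bar>real r * \<theta> - of_int a\<bar> \<le> 1 / real r" and lam: "0 \<le> l"
  shows "real (card {i\<in>{..<r}. frac (x + real i * \<theta>) < l}) \<le> real r * l + 3"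
proof (cases "l + 2 / real r \<le> 1")
  case True
  define \<eta> where "\<eta> = 1 / real r"
  define g where "g = (\<lambda>i. nat ((a * int i) mod int r))"
  have bij: "bij_betw g {..<r} {..<r}"
    using bij_betw_affine_mod[OF r cop, of 0] by (simp add: g_def)
  have "{i\<in>{..<r}. frac (x + real i * \<theta>) < l}
      \<subseteq> {i\<in>{..<r}. frac ((x + \<eta>) + real (g i) / real r) < l + 2 * \<eta>}"
  proof
    fix i assume "i \<in> {i\<in>{..<r}. frac (x + real i * \<theta>) < l}"
    hence i: "i < r" and lt: "frac (x + real i * \<theta>) < l" by auto
    obtain e where e: "\<bar>e\<bar> \<le> \<eta>"
      and eq: "frac (x + real i * \<theta>) = frac (x + real (g i) / real r + e)"
      using frac_mult_rational_approx[OF r app i] unfolding g_def \<eta>_def by blast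
    have "frac (x + real (g i) / real r + \<eta>) < l + 2 * \<eta>"
      using frac_less_perturb_upper[OF e] lt True unfolding eq \<eta>_def by simp
    moreover have "x + real (g i) / real r + \<eta> = (x + \<eta>) + real (g i) / real r" by simp
    ultimately show "i \<in> {i\<in>{..<r}. frac ((x + \<eta>) + real (g i) / real r) < l + 2 * \<eta>}"
      using i by simp
  qed
  hence "card {i\<in>{..<r}. frac (x + real i * \<theta>) < l}
      \<le> card {i\<in>{..<r}. frac ((x + \<eta>) + real (g i) / real r) < l + 2 * \<eta>}"
    by (intro card_mono) auto
  also have "\<dots> = card {j\<in>{..<r}. frac ((x + \<eta>) + real j / real r) < l + 2 * \<eta>}"
    by (rule card_Collect_bij_betw[OF bij])
  finally have "real (card {i\<in>{..<r}. frac (x + real i * \<theta>) < l})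
      \<le> real (card {j\<in>{..<r}. frac ((x + \<eta>) + real j / real r) < l + 2 * \<eta>})"
    by simp
  also have "\<dots> \<le> real r * (l + 2 * \<eta>) + 1"
    using True lam r by (intro card_frac_grid_bounds(1)) (auto simp: \<eta>_def)
  also have "\<dots> = real r * l + 3" using r by (simp add: \<eta>_def field_simps)
  finally show ?thesis .
next
  case False
  have "card {i\<in>{..<r}. frac (x + real i * \<theta>) < l} \<le> card {..<r}"
    by (intro card_mono) auto
  hence "real (card {i\<in>{..<r}. frac (x + real i * \<theta>) < l}) \<le> real r" by simp
  moreover have "real r < real r * l + 2"
    using False r by (simp add: field_simps)
  ultimately show ?thesis by linarith
qed

lemma card_frac_block_ge:
  fixes \<theta> x l :: real and r :: nat and a :: int
  assumes r: "r \<ge> 1" and cop: "coprime a (int r)"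
    and app: "\<bar>real r * \<theta> - of_int a\<bar> \<le> 1 / real r" and lam: "l \<le> 1"
  shows "real r * l - 3 \<le> real (card {i\<in>{..<r}. frac (x + real i * \<theta>) < l})"
proof (cases "2 / real r \<le> l")
  case True
  define \<eta> where "\<eta> = 1 / real r"
  define g where "g = (\<lambda>i. nat ((a * int i) mod int r))"
  have bij: "bij_betw g {..<r} {..<r}"
    using bij_betw_affine_mod[OF r cop, of 0] by (simp add: g_def)
  have "{i\<in>{..<r}. frac ((x - \<eta>) + real (g i) / real r) < l - 2 * \<eta>}
      \<subseteq> {i\<in>{..<r}. frac (x + real i * \<theta>) < l}"
  proof
    fix i assume "i \<in> {i\<in>{..<r}. frac ((x - \<eta>) + real (g i) / real r) < l - 2 * \<eta>}"
    hence i: "i < r" and lt: "frac ((x + real (g i) / real r) - \<eta>) < l - 2 * \<eta>"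
      by (auto simp: diff_add_eq)
    obtain e where e: "\<bar>e\<bar> \<le> \<eta>"
      and eq: "frac (x + real i * \<theta>) = frac (x + real (g i) / real r + e)"
      using frac_mult_rational_approx[OF r app i] unfolding g_def \<eta>_def by blast
    have "frac (x + real i * \<theta>) < l"
      unfolding eq by (rule frac_less_perturb_lower[OF e lt lam])
    thus "i \<in> {i\<in>{..<r}. frac (x + real i * \<theta>) < l}" using i by simp
  qed
  hence "card {i\<in>{..<r}. frac ((x - \<eta>) + real (g i) / real r) < l - 2 * \<eta>}
      \<le> card {i\<in>{..<r}. frac (x + real i * \<theta>) < l}"
    by (intro card_mono) auto
  moreover have "card {i\<in>{..<r}. frac ((x - \<eta>) + real (g i) / real r) < l - 2 * \<eta>}
      = card {j\<in>{..<r}. frac ((x - \<eta>) + real j / real r) < l - 2 * \<eta>}"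
    by (rule card_Collect_bij_betw[OF bij])
  moreover have "real r * (l - 2 * \<eta>) - 1
      \<le> real (card {j\<in>{..<r}. frac ((x - \<eta>) + real j / real r) < l - 2 * \<eta>})"
  proof (rule card_frac_grid_bounds(2)[OF r])
    have "0 \<le> \<eta>" "2 * \<eta> \<le> l" using True by (simp_all add: \<eta>_def)
    thus "0 \<le> l - 2 * \<eta>" "l - 2 * \<eta> \<le> 1" using lam by linarith+
  qed
  moreover have "real r * (l - 2 * \<eta>) - 1 = real r * l - 3"
    using r by (simp add: \<eta>_def field_simps)
  ultimately show ?thesis by linarith
next
  case False
  hence "real r * l < 2" using r by (simp add: field_simps)
  thus ?thesis by linarith
qed

lemma card_int_interval_shift:
  fixes m0 :: int
  shows "card {m\<in>{m0..<m0 + int r}. P m} = card {i\<in>{..<r}. P (m0 + int i)}"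
proof -
  have "{m\<in>{m0..<m0 + int r}. P m} = (\<lambda>i. m0 + int i) ` {i\<in>{..<r}. P (m0 + int i)}"
  proof
    show "{m\<in>{m0..<m0 + int r}. P m} \<subseteq> (\<lambda>i. m0 + int i) ` {i\<in>{..<r}. P (m0 + int i)}"
    proof
      fix m assume m: "m \<in> {m\<in>{m0..<m0 + int r}. P m}"
      hence "m = m0 + int (nat (m - m0))" "nat (m - m0) < r" by auto
      thus "m \<in> (\<lambda>i. m0 + int i) ` {i\<in>{..<r}. P (m0 + int i)}" using m
        by (metis (mono_tags, lifting) image_eqI lessThan_iff mem_Collect_eq)
    qed
  qed auto
  moreover have "inj_on (\<lambda>i. m0 + int i) {i\<in>{..<r}. P (m0 + int i)}" by (auto simp: inj_on_def)
  ultimately show ?thesis by (simp add: card_image)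
qed

text \<open>Split the interval into blocks of length \<open>r\<close>.\<close>

lemma card_frac_progression_discrepancy:
  fixes \<theta> c l :: real and r L :: nat and a m0 :: int
  assumes r: "r \<ge> 1" and cop: "coprime a (int r)"
    and app: "\<bar>real r * \<theta> - of_int a\<bar> \<le> 1 / real r" and lam: "0 \<le> l" "l \<le> 1"
  shows "\<bar>real (card {m\<in>{m0..<m0 + int L}. frac (c + of_int m * \<theta>) < l}) - real L * l\<bar>
           \<le> 3 * real L / real r + 2 * real r"
proof (induction L arbitrary: m0 rule: less_induct)
  case (less L)
  show ?case
  proof (cases "L < r")
    case True
    have "card {m\<in>{m0..<m0 + int L}. frac (c + of_int m * \<theta>) < l} \<le> card {m0..<m0 + int L}"
      by (intro card_mono) auto
    hence "real (card {m\<in>{m0..<m0 + int L}. frac (c + of_int m * \<theta>) < l}) \<le> real L" by simp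
    moreover have "0 \<le> real L * l" "real L * l \<le> real L" using lam by (simp_all add: mult_left_le)
    moreover have "real L \<le> 2 * real r" "0 \<le> 3 * real L / real r" using True by simp_all
    ultimately show ?thesis by (intro abs_leI) linarith+
  next
    case False
    define L' where "L' = L - r"
    have LL: "L = r + L'" and "L' < L" using False r by (simp_all add: L'_def)
    have split: "{m\<in>{m0..<m0 + int L}. frac (c + of_int m * \<theta>) < l}
       = {m\<in>{m0..<m0 + int r}. frac (c + of_int m * \<theta>) < l} \<union>
         {m\<in>{m0 + int r..<m0 + int r + int L'}. frac (c + of_int m * \<theta>) < l}"
      by (auto simp: LL)
    have "card {m\<in>{m0..<m0 + int L}. frac (c + of_int m * \<theta>) < l}
       = card {m\<in>{m0..<m0 + int r}. frac (c + of_int m * \<theta>) < l} +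
         card {m\<in>{m0 + int r..<m0 + int r + int L'}. frac (c + of_int m * \<theta>) < l}"
      unfolding split by (intro card_Un_disjoint finite_Collect_conjI disjI1) auto
    moreover have "card {m\<in>{m0..<m0 + int r}. frac (c + of_int m * \<theta>) < l}
       = card {i\<in>{..<r}. frac ((c + of_int m0 * \<theta>) + real i * \<theta>) < l}"
      by (subst card_int_interval_shift) (simp add: algebra_simps)
    moreover note card_frac_block_le[OF r cop app lam(1), of "c + of_int m0 * \<theta>"]
      card_frac_block_ge[OF r cop app lam(2), of "c + of_int m0 * \<theta>"]
      less.IH[OF \<open>L' < L\<close>, of "m0 + int r"]
    moreover have "3 * real L / real r = 3 + 3 * real L' / real r"
      using r by (simp add: LL field_simps)
    ultimately show ?thesis by (simp add: LL algebra_simps abs_le_iff)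
  qed
qed

section \<open>Multiples of \<open>q\<close> in a Beatty sequence\<close>

lemma int_dvd_floor_iff_frac:
  fixes x :: real and q :: nat
  assumes "q \<ge> 1"
  shows "int q dvd \<lfloor>x\<rfloor> \<longleftrightarrow> frac (x / real q) < 1 / real q"
proof -
  have q: "real q > 0" using assms by simp
  show ?thesis
  proof
    assume "int q dvd \<lfloor>x\<rfloor>"
    then obtain t where "\<lfloor>x\<rfloor> = int q * t" by (auto simp: dvd_def)
    hence "of_int \<lfloor>x\<rfloor> = real q * of_int t" by simp
    hence "real q * of_int t \<le> x" "x < real q * of_int t + 1" by linarith+
    hence t: "of_int t \<le> x / real q" "x / real q < of_int t + 1 / real q"
      using q by (simp_all add: field_simps)
    moreover have "1 / real q \<le> 1" using assms by simp
    ultimately have "\<lfloor>x / real q\<rfloor> = t" by (intro floor_unique) linarith+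
    thus "frac (x / real q) < 1 / real q" using t by (simp add: frac_def)
  next
    assume "frac (x / real q) < 1 / real q"
    define t where "t = \<lfloor>x / real q\<rfloor>"
    have "x / real q < of_int t + 1 / real q" "of_int t \<le> x / real q"
      using \<open>frac (x / real q) < 1 / real q\<close> by (simp_all add: t_def frac_def)
    hence "x < (of_int t + 1 / real q) * real q" "of_int t * real q \<le> x"
      using q by (simp_all only: pos_divide_less_eq pos_le_divide_eq)
    hence "real q * of_int t \<le> x" "x < real q * of_int t + 1"
      using q by (simp_all add: algebra_simps)
    hence "\<lfloor>x\<rfloor> = int q * t" by (intro floor_unique) auto
    thus "int q dvd \<lfloor>x\<rfloor>" by simp
  qed
qed

lemma beatty_index_range_iff:
  fixes \<alpha> \<beta> :: real and N :: nat and m :: int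
  assumes "\<alpha> > 0"
  shows "m \<in> {\<lceil>(1 - \<beta>) / \<alpha>\<rceil>..<\<lceil>(real N + 1 - \<beta>) / \<alpha>\<rceil>}
    \<longleftrightarrow> 1 \<le> \<lfloor>\<alpha> * of_int m + \<beta>\<rfloor> \<and> \<lfloor>\<alpha> * of_int m + \<beta>\<rfloor> \<le> int N"
proof -
  have "\<lceil>(1 - \<beta>) / \<alpha>\<rceil> \<le> m \<longleftrightarrow> 1 \<le> \<alpha> * of_int m + \<beta>"
    using assms by (simp add: ceiling_le_iff field_simps)
  moreover have "m < \<lceil>(real N + 1 - \<beta>) / \<alpha>\<rceil> \<longleftrightarrow> \<alpha> * of_int m + \<beta> < real N + 1"
    using assms by (simp add: less_ceiling_iff field_simps)
  ultimately show ?thesis by (simp add: le_floor_iff floor_le_iff)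
qed

lemma strict_mono_floor_affine:
  fixes \<alpha> \<beta> :: real
  assumes "\<alpha> \<ge> 1"
  shows "strict_mono (\<lambda>m::int. \<lfloor>\<alpha> * of_int m + \<beta>\<rfloor>)"
proof (rule strict_monoI)
  fix x y :: int assume "x < y"
  hence "\<alpha> * (of_int x + 1) \<le> \<alpha> * of_int y"
    using assms by (intro mult_left_mono) auto
  hence "\<alpha> * of_int x + \<beta> + 1 \<le> \<alpha> * of_int y + \<beta>"
    using assms by (simp add: distrib_left)
  thus "\<lfloor>\<alpha> * of_int x + \<beta>\<rfloor> < \<lfloor>\<alpha> * of_int y + \<beta>\<rfloor>" by linarith
qed

lemma card_beatty_atMost:
  fixes \<alpha> \<beta> :: real and N :: nat
  assumes "\<alpha> > 1"
  obtains m0 :: int and L :: nat where "\<bar>real L - real N / \<alpha>\<bar> \<le> 1"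
    "\<And>m. m \<in> {m0..<m0 + int L} \<Longrightarrow> 1 \<le> \<lfloor>\<alpha> * of_int m + \<beta>\<rfloor>"
    "\<And>P. card {n \<in> beatty \<alpha> \<beta>. n \<le> N \<and> P n}
       = card {m \<in> {m0..<m0 + int L}. P (nat \<lfloor>\<alpha> * of_int m + \<beta>\<rfloor>)}"
proof -
  define m0 where "m0 = \<lceil>(1 - \<beta>) / \<alpha>\<rceil>"
  define m1 where "m1 = \<lceil>(real N + 1 - \<beta>) / \<alpha>\<rceil>"
  let ?b = "\<lambda>m. nat \<lfloor>\<alpha> * of_int m + \<beta>\<rfloor>"
  have range: "m \<in> {m0..<m1} \<longleftrightarrow> 1 \<le> \<lfloor>\<alpha> * of_int m + \<beta>\<rfloor> \<and> \<lfloor>\<alpha> * of_int m + \<beta>\<rfloor> \<le> int N" for m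
    unfolding m0_def m1_def using assms by (intro beatty_index_range_iff) simp
  have len: "real N / \<alpha> - 1 \<le> of_int (m1 - m0)" "of_int (m1 - m0) \<le> real N / \<alpha> + 1"
  proof -
    have "(real N + 1 - \<beta>) / \<alpha> - (1 - \<beta>) / \<alpha> = real N / \<alpha>"
      using assms by (simp add: field_simps)
    moreover have "(1 - \<beta>) / \<alpha> \<le> of_int m0" "of_int m0 < (1 - \<beta>) / \<alpha> + 1"
      "(real N + 1 - \<beta>) / \<alpha> \<le> of_int m1" "of_int m1 < (real N + 1 - \<beta>) / \<alpha> + 1"
      unfolding m0_def m1_def by linarith+
    ultimately show "real N / \<alpha> - 1 \<le> of_int (m1 - m0)" "of_int (m1 - m0) \<le> real N / \<alpha> + 1"
      by simp_all
  qed
  have "m0 \<le> m1"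
    unfolding m0_def m1_def using assms by (intro ceiling_mono divide_right_mono) auto
  define L where "L = nat (m1 - m0)"
  have m1: "m1 = m0 + int L" using \<open>m0 \<le> m1\<close> by (simp add: L_def)
  have "\<bar>real L - real N / \<alpha>\<bar> \<le> 1" using len \<open>m0 \<le> m1\<close> by (simp add: L_def abs_le_iff)
  moreover have "1 \<le> \<lfloor>\<alpha> * of_int m + \<beta>\<rfloor>" if "m \<in> {m0..<m0 + int L}" for m
    using range[of m] that by (simp add: m1)
  moreover have "card {n \<in> beatty \<alpha> \<beta>. n \<le> N \<and> P n} = card {m \<in> {m0..<m1}. P (?b m)}" for P
  proof -
    have "{n \<in> beatty \<alpha> \<beta>. n \<le> N \<and> P n} = ?b ` {m \<in> {m0..<m1}. P (?b m)}"
    proof (intro equalityI subsetI)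
      fix n assume "n \<in> {n \<in> beatty \<alpha> \<beta>. n \<le> N \<and> P n}"
      then obtain m where m: "int n = \<lfloor>\<alpha> * of_int m + \<beta>\<rfloor>" "1 \<le> n" "n \<le> N" "P n"
        by (auto simp: beatty_def)
      have "m \<in> {m0..<m1}" unfolding range using m by linarith
      moreover have "n = ?b m" using m(1) by (simp flip: m(1))
      ultimately show "n \<in> ?b ` {m \<in> {m0..<m1}. P (?b m)}" using m(4) by auto
    next
      fix n assume "n \<in> ?b ` {m \<in> {m0..<m1}. P (?b m)}"
      then obtain m where m: "m \<in> {m0..<m1}" "P (?b m)" "n = ?b m" by blast
      moreover have "1 \<le> \<lfloor>\<alpha> * of_int m + \<beta>\<rfloor>" "\<lfloor>\<alpha> * of_int m + \<beta>\<rfloor> \<le> int N"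
        using m(1) range by blast+
      ultimately have "int n = \<lfloor>\<alpha> * of_int m + \<beta>\<rfloor>" "1 \<le> n" "n \<le> N" by linarith+
      thus "n \<in> {n \<in> beatty \<alpha> \<beta>. n \<le> N \<and> P n}" using m by (auto simp: beatty_def)
    qed
    moreover have "inj_on ?b {m0..<m1}"
    proof (rule inj_onI)
      fix m m' assume "m \<in> {m0..<m1}" "m' \<in> {m0..<m1}" "?b m = ?b m'"
      hence "\<lfloor>\<alpha> * of_int m + \<beta>\<rfloor> = \<lfloor>\<alpha> * of_int m' + \<beta>\<rfloor>" using range by (simp add: nat_eq_iff)
      thus "m = m'" using strict_mono_eq[OF strict_mono_floor_affine] assms by simp
    qed
    ultimately show ?thesis
      by (metis (no_types, lifting) card_image inj_on_subset mem_Collect_eq subsetI)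
  qed
  ultimately show ?thesis using that[of L m0] by (simp add: m1)
qed

lemma card_beatty_dvd_eq_card_frac:
  fixes \<alpha> \<beta> :: real and N q :: nat
  assumes "\<alpha> > 1" "q \<ge> 1"
  obtains m0 :: int and L :: nat where "\<bar>real L - real N / \<alpha>\<bar> \<le> 1"
    "card {n \<in> beatty \<alpha> \<beta>. n \<le> N \<and> q dvd n}
       = card {m \<in> {m0..<m0 + int L}. frac (\<beta> / real q + of_int m * (\<alpha> / real q)) < 1 / real q}"
proof (rule card_beatty_atMost[OF assms(1), where N = N and \<beta> = \<beta>])
  fix m0 :: int and L :: nat
  assume L: "\<bar>real L - real N / \<alpha>\<bar> \<le> 1"
    and pos: "\<And>m. m \<in> {m0..<m0 + int L} \<Longrightarrow> 1 \<le> \<lfloor>\<alpha> * of_int m + \<beta>\<rfloor>"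
    and card: "\<And>P. card {n \<in> beatty \<alpha> \<beta>. n \<le> N \<and> P n}
       = card {m \<in> {m0..<m0 + int L}. P (nat \<lfloor>\<alpha> * of_int m + \<beta>\<rfloor>)}"
  have "q dvd nat \<lfloor>\<alpha> * of_int m + \<beta>\<rfloor> \<longleftrightarrow> frac (\<beta> / real q + of_int m * (\<alpha> / real q)) < 1 / real q"
    if "m \<in> {m0..<m0 + int L}" for m
  proof -
    have z: "int (nat \<lfloor>\<alpha> * of_int m + \<beta>\<rfloor>) = \<lfloor>\<alpha> * of_int m + \<beta>\<rfloor>"
      using pos[OF that] by simp
    have "q dvd nat \<lfloor>\<alpha> * of_int m + \<beta>\<rfloor> \<longleftrightarrow> int q dvd int (nat \<lfloor>\<alpha> * of_int m + \<beta>\<rfloor>)"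
      by (rule int_dvd_int_iff[symmetric])
    also have "\<dots> \<longleftrightarrow> int q dvd \<lfloor>\<alpha> * of_int m + \<beta>\<rfloor>" by (simp only: z)
    also have "\<dots> \<longleftrightarrow> frac ((\<alpha> * of_int m + \<beta>) / real q) < 1 / real q"
      by (rule int_dvd_floor_iff_frac[OF assms(2)])
    also have "(\<alpha> * of_int m + \<beta>) / real q = \<beta> / real q + of_int m * (\<alpha> / real q)"
      using assms(2) by (simp add: field_simps)
    finally show ?thesis .
  qed
  hence "card {m \<in> {m0..<m0 + int L}. q dvd nat \<lfloor>\<alpha> * of_int m + \<beta>\<rfloor>}
      = card {m \<in> {m0..<m0 + int L}. frac (\<beta> / real q + of_int m * (\<alpha> / real q)) < 1 / real q}"
    by (intro arg_cong[where f = card] Collect_cong) blast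
  thus thesis using that[OF L] card[of "\<lambda>n. q dvd n"] by simp
qed

lemma beatty_dvd_count_rational_approx:
  fixes \<alpha> \<beta> :: real and N q r :: nat and a :: int
  assumes \<alpha>: "\<alpha> > 1" and q: "q \<ge> 1" and r: "r \<ge> 1" and cop: "coprime a (int r)"
    and app: "\<bar>real r * (\<alpha> / real q) - of_int a\<bar> \<le> 1 / real r"
  shows "\<bar>real (card {n \<in> beatty \<alpha> \<beta>. n \<le> N \<and> q dvd n}) - real N / (\<alpha> * real q)\<bar>
    \<le> 3 * (real N / \<alpha> + 1) / real r + 2 * real r + 1"
proof -
  obtain m0 L where L: "\<bar>real L - real N / \<alpha>\<bar> \<le> 1"
    and card: "card {n \<in> beatty \<alpha> \<beta>. n \<le> N \<and> q dvd n}
       = card {m \<in> {m0..<m0 + int L}. frac (\<beta> / real q + of_int m * (\<alpha> / real q)) < 1 / real q}"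
    by (rule card_beatty_dvd_eq_card_frac[OF \<alpha> q, where N = N and \<beta> = \<beta>])
  have "\<bar>real (card {n \<in> beatty \<alpha> \<beta>. n \<le> N \<and> q dvd n}) - real L * (1 / real q)\<bar>
      \<le> 3 * real L / real r + 2 * real r"
    unfolding card using q by (intro card_frac_progression_discrepancy[OF r cop app]) auto
  moreover have "3 * real L / real r \<le> 3 * (real N / \<alpha> + 1) / real r"
    using L by (intro divide_right_mono) auto
  moreover have "\<bar>real L * (1 / real q) - real N / (\<alpha> * real q)\<bar> \<le> 1"
  proof -
    have "real L * (1 / real q) - real N / (\<alpha> * real q) = (real L - real N / \<alpha>) / real q"
      using \<alpha> q by (simp add: field_simps)
    hence "\<bar>real L * (1 / real q) - real N / (\<alpha> * real q)\<bar> = \<bar>real L - real N / \<alpha>\<bar> / real q"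
      by (simp add: abs_divide)
    also have "\<dots> \<le> 1 / real q" using L q by (intro divide_right_mono) auto
    also have "\<dots> \<le> 1" using q by simp
    finally show ?thesis .
  qed
  ultimately show ?thesis by linarith
qed

lemma diophantine_denominator_lower:
  fixes \<alpha> c T Q :: real and q r :: nat and a :: int
  assumes dio: "c \<le> real r powr T * dist_int (\<alpha> * real r)" and q: "q \<ge> 1" and r: "r \<ge> 1"
    and Q: "Q > 0" and app: "\<bar>real r * (\<alpha> / real q) - of_int a\<bar> < 1 / Q"
  shows "c * Q < real q * real r powr T"
proof -
  have "dist_int (\<alpha> * real r) \<le> \<bar>\<alpha> * real r - of_int (int q * a)\<bar>" by (rule dist_int_le)
  also have "\<dots> = real q * \<bar>real r * (\<alpha> / real q) - of_int a\<bar>"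
    using q by (simp add: field_simps flip: abs_mult)
  also have "\<dots> < real q / Q" using q app by (simp add: field_simps)
  finally have "c < real r powr T * (real q / Q)"
    using r by (intro le_less_trans[OF dio] mult_strict_left_mono) auto
  thus ?thesis using Q by (simp add: field_simps)
qed

lemma card_dvd_le_div:
  fixes U :: "nat set" and N q :: nat
  assumes "U \<subseteq> {1..N}" "q \<ge> 1"
  shows "real (card {n\<in>U. q dvd n}) \<le> real N / real q"
proof -
  have "{n\<in>U. q dvd n} \<subseteq> (\<lambda>j. q * j) ` {1..N div q}"
  proof
    fix n assume n: "n \<in> {n\<in>U. q dvd n}"
    then obtain j where j: "n = q * j" by (auto simp: dvd_def)
    have "1 \<le> n" "n \<le> N" using n assms(1) by auto
    hence "1 \<le> j" "j \<le> N div q" using j assms(2)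
      by (simp_all add: less_eq_div_iff_mult_less_eq mult.commute Suc_le_eq)
    thus "n \<in> (\<lambda>j. q * j) ` {1..N div q}" using j by (intro image_eqI[of _ _ j]) auto
  qed
  hence "card {n\<in>U. q dvd n} \<le> card ((\<lambda>j. q * j) ` {1..N div q})"
    by (intro card_mono) auto
  also have "\<dots> \<le> card {1..N div q}" by (rule card_image_le) simp
  finally have "real (card {n\<in>U. q dvd n}) \<le> real (N div q)" by simp
  also have "\<dots> \<le> real N / real q" by (rule of_nat_div_le_of_nat)
  finally show ?thesis .
qed

lemma beatty_dvd_count_trivial:
  fixes \<alpha> \<beta> :: real and N q :: nat
  assumes "\<alpha> \<ge> 1" "q \<ge> 1"
  shows "\<bar>real (card {n \<in> beatty \<alpha> \<beta>. n \<le> N \<and> q dvd n}) - real N / (\<alpha> * real q)\<bar>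
    \<le> real N / real q"
proof -
  have "{n \<in> beatty \<alpha> \<beta>. n \<le> N \<and> q dvd n} = {n \<in> {n \<in> beatty \<alpha> \<beta>. n \<le> N}. q dvd n}"
    by auto
  moreover have "{n \<in> beatty \<alpha> \<beta>. n \<le> N} \<subseteq> {1..N}" by (auto simp: beatty_def)
  ultimately have "real (card {n \<in> beatty \<alpha> \<beta>. n \<le> N \<and> q dvd n}) \<le> real N / real q"
    using card_dvd_le_div assms(2) by metis
  moreover have "real N / (\<alpha> * real q) \<le> real N / real q"
    using assms by (intro divide_left_mono) auto
  moreover have "0 \<le> real N / (\<alpha> * real q)" using assms by simp
  ultimately show ?thesis by (simp add: abs_le_iff)
qed

lemma denominator_lower_bound:
  fixes c T N Q :: real and q r :: nat
  assumes c: "c > 0" and T: "T \<ge> 1" and N: "N \<ge> 1" and r: "r \<ge> 1"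
    and q: "q \<ge> 1" "real q \<le> N powr (1/4)" and Q: "sqrt N \<le> Q"
    and lt: "c * Q < real q * real r powr T"
  shows "c powr (1/T) * N powr (1 / (4 * T)) < real r"
proof -
  have "0 \<le> Q" using order_trans[OF real_sqrt_ge_zero Q] N by simp
  have "c * N powr (1/4) = c * (N powr (1/2) / N powr (1/4))"
    using N by (simp add: powr_diff[symmetric])
  also have "\<dots> \<le> c * (Q / real q)"
    using c q Q N \<open>0 \<le> Q\<close> by (intro mult_left_mono frac_le) (auto simp: powr_half_sqrt)
  also have "\<dots> < real r powr T" using lt q by (simp add: field_simps)
  finally have "(c * N powr (1/4)) powr (1/T) < (real r powr T) powr (1/T)"
    using c T by (intro powr_less_mono2) auto
  also have "\<dots> = real r" using T r by (simp add: powr_powr)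
  also have "(c * N powr (1/4)) powr (1/T) = c powr (1/T) * N powr (1 / (4 * T))"
    using c N by (simp add: powr_mult powr_powr)
  finally show ?thesis .
qed

lemma large_denominator_error_le:
  fixes \<alpha> c T N r \<delta> :: real
  assumes \<alpha>: "\<alpha> \<ge> 1" and c: "c > 0" and N: "N \<ge> 1" and r: "c powr (1/T) * N powr \<delta> < r"
  shows "3 * (N / \<alpha> + 1) / r \<le> 6 * c powr (-1/T) * N powr (1 - \<delta>)"
proof -
  have pos: "0 < c powr (1/T) * N powr \<delta>" using c N by simp
  have "N / \<alpha> \<le> N" using \<alpha> N by (simp add: divide_le_eq mult_le_cancel_left1)
  hence "3 * (N / \<alpha> + 1) / r \<le> 6 * N / r"
    using N pos r by (intro divide_right_mono) auto
  also have "\<dots> \<le> 6 * N / (c powr (1/T) * N powr \<delta>)"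
    using pos r N by (intro divide_left_mono) auto
  also have "\<dots> = 6 * c powr (-1/T) * N powr (1 - \<delta>)"
    using c N by (simp add: powr_diff powr_minus_divide field_simps)
  finally show ?thesis .
qed

text \<open>The approximation \<open>a / r\<close> to \<open>\<alpha> / q\<close> from Dirichlet's theorem with denominator bound \<open>\<surd>N\<close>
  has \<open>r \<ge> N\<^sup>\<delta>\<close> because \<open>\<alpha>\<close> is of finite type, so both error terms \<open>N / r\<close> and \<open>r\<close> are
  \<open>O(N\<^sup>1\<^sup>-\<^sup>\<delta>)\<close>; for large \<open>q\<close> the trivial bound suffices.\<close>

lemma beatty_dvd_count_discrepancy:
  fixes \<alpha> \<beta> c T :: real and N q :: nat
  assumes \<alpha>: "\<alpha> > 1" and c: "c > 0" and T: "T \<ge> 1"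
    and dio: "\<And>n::nat. n \<ge> 1 \<Longrightarrow> c \<le> real n powr T * dist_int (\<alpha> * real n)"
    and q: "q \<ge> 1" and N: "N \<ge> 1"
  shows "\<bar>real (card {n \<in> beatty \<alpha> \<beta>. n \<le> N \<and> q dvd n}) - real N / (\<alpha> * real q)\<bar>
    \<le> (6 * c powr (-1/T) + 5) * real N powr (1 - 1 / (4 * T))"
    (is "\<bar>?A - _\<bar> \<le> ?K * real N powr (1 - ?\<delta>)")
proof -
  have \<delta>: "0 < ?\<delta>" "?\<delta> \<le> 1/4" using T by (auto simp: field_simps)
  have Np: "real N \<ge> 1" using N by simp
  have K: "1 \<le> ?K" using c by simp
  show ?thesis
  proof (cases "real q > real N powr (1/4)")
    case True
    have "0 < real N powr (1/4)" using Np by simp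
    hence "real N / real q < real N / real N powr (1/4)"
      using True Np q by (intro divide_strict_left_mono mult_pos_pos) auto
    also have "\<dots> = real N powr (3/4)"
      using Np powr_diff[of "real N" 1 "1/4"] by simp
    also have "\<dots> \<le> real N powr (1 - ?\<delta>)" using Np \<delta> by (intro powr_mono) auto
    also have "\<dots> \<le> ?K * real N powr (1 - ?\<delta>)"
      using mult_right_mono[OF K, of "real N powr (1 - ?\<delta>)"] by simp
    finally show ?thesis using beatty_dvd_count_trivial[of \<alpha> q \<beta> N] \<alpha> q by simp
  next
    case False
    define Q where "Q = nat \<lceil>sqrt (real N)\<rceil>"
    have Q: "sqrt (real N) \<le> real Q" "real Q \<le> sqrt (real N) + 1" "Q > 0"
      using Np by (simp_all add: Q_def)
    obtain a k where cop: "coprime a k" and k: "0 < k" "k \<le> int Q"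
      and app: "\<bar>of_int k * (\<alpha> / real q) - of_int a\<bar> < 1 / real Q"
      using Dirichlet_approx_coprime[OF Q(3)] by blast
    define r where "r = nat k"
    have r: "r \<ge> 1" "r \<le> Q" "k = int r" using k by (simp_all add: r_def)
    have app_r: "\<bar>real r * (\<alpha> / real q) - of_int a\<bar> < 1 / real Q" using app r(3) by simp
    have "1 / real Q \<le> 1 / real r" using r by (simp add: frac_le)
    hence "\<bar>?A - real N / (\<alpha> * real q)\<bar> \<le> 3 * (real N / \<alpha> + 1) / real r + 2 * real r + 1"
      using app_r cop r(3) by (intro beatty_dvd_count_rational_approx[OF \<alpha> q r(1)]) auto
    moreover have "c * real Q < real q * real r powr T"
      using Q by (intro diophantine_denominator_lower[OF dio[OF r(1)] q r(1) _ app_r]) simp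
    hence "c powr (1/T) * real N powr ?\<delta> < real r"
      using False Q Np by (intro denominator_lower_bound[OF c T _ r(1) q]) auto
    hence "3 * (real N / \<alpha> + 1) / real r \<le> 6 * c powr (-1/T) * real N powr (1 - ?\<delta>)"
      using \<alpha> c Np by (intro large_denominator_error_le) auto
    moreover have "2 * real r + 1 \<le> 5 * real N powr (1 - ?\<delta>)"
    proof -
      have "real r \<le> real Q" "1 \<le> sqrt (real N)" using r Np by simp_all
      hence "2 * real r + 1 \<le> 5 * sqrt (real N)" using Q by linarith
      also have "sqrt (real N) = real N powr (1/2)" using Np by (simp add: powr_half_sqrt)
      also have "\<dots> \<le> real N powr (1 - ?\<delta>)" using Np \<delta> by (intro powr_mono) auto
      finally show ?thesis by simp
    qed
    moreover have "?K * real N powr (1 - ?\<delta>)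
        = 6 * c powr (-1/T) * real N powr (1 - ?\<delta>) + 5 * real N powr (1 - ?\<delta>)"
      by (simp add: algebra_simps)
    ultimately show ?thesis by linarith
  qed
qed

section \<open>Euler product of \<open>\<zeta>(k)\<close>\<close>

lemma sum_inverse_squares_le:
  assumes "1 \<le> P" "P \<le> M"
  shows "(\<Sum>m\<in>{P<..M}. 1 / real m ^ 2) \<le> 1 / real P - 1 / real M"
  using assms(2)
proof (induction M rule: dec_induct)
  case base
  thus ?case by simp
next
  case (step M)
  have M1: "real M \<ge> 1" using step assms by simp
  have b: "1 / real (Suc M) ^ 2 \<le> 1 / real M - 1 / real (Suc M)"
  proof -
    have e1: "1 / real M - 1 / real (Suc M) = 1 / (real M * (real M + 1))" using M1 by (simp add: field_simps)
    have "real M * (real M + 1) \<le> (real M + 1) * (real M + 1)" by (intro mult_right_mono) auto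
    moreover have "real (Suc M) ^ 2 = (real M + 1) * (real M + 1)" by (simp add: power2_eq_square algebra_simps)
    ultimately have "real M * (real M + 1) \<le> real (Suc M) ^ 2" by linarith
    moreover have "0 < real M * (real M + 1)" using M1 by simp
    ultimately show ?thesis unfolding e1 by (simp add: frac_le)
  qed
  have "{P<..Suc M} = insert (Suc M) {P<..M}" using step by auto
  hence "(\<Sum>m\<in>{P<..Suc M}. 1 / real m ^ 2) = 1 / real (Suc M) ^ 2 + (\<Sum>m\<in>{P<..M}. 1 / real m ^ 2)"
    by simp
  also have "\<dots> \<le> 1 / real (Suc M) ^ 2 + (1 / real P - 1 / real M)" using step by simp
  finally show ?case using b by simp
qed

definition zeta_term :: "nat \<Rightarrow> nat \<Rightarrow> real" where
  "zeta_term k n = 1 / real n ^ k"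

lemma zeta_term_nonneg: "zeta_term k n \<ge> 0"
  by (simp add: zeta_term_def)

lemma summable_zeta_term:
  assumes "k \<ge> 2"
  shows "summable (zeta_term k)"
  using inverse_power_summable[OF assms] by (simp add: zeta_term_def[abs_def] inverse_eq_divide)

lemma zeta_term_summable_on:
  assumes "k \<ge> 2"
  shows "zeta_term k summable_on A"
proof -
  have "zeta_term k summable_on UNIV"
    by (rule summable_nonneg_imp_summable_on_strong[OF summable_zeta_term[OF assms]])
      (intro always_eventually allI zeta_term_nonneg)
  thus ?thesis by (rule summable_on_subset) simp
qed

text \<open>The term \<open>n = 0\<close> of \<open>zeta_term\<close> is \<open>1 / 0 = 0\<close>, so summing over all of \<open>\<nat>\<close> is harmless.\<close>

lemma zeta_real_eq_infsum:
  assumes "k \<ge> 2"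
  shows "zeta_real (real k) = infsum (zeta_term k) UNIV"
proof -
  note sm = summable_zeta_term[OF assms]
  have "infsum (zeta_term k) UNIV = suminf (zeta_term k)"
    by (intro infsumI sums_nonneg_imp_has_sum summable_sums[OF sm] zeta_term_nonneg)
  also have "\<dots> = suminf (\<lambda>n. zeta_term k (Suc n))"
    using suminf_split_head[OF sm] assms by (simp add: zeta_term_def)
  also have "(\<lambda>n. zeta_term k (Suc n)) = (\<lambda>n. 1 / real (Suc n) powr real k)"
    by (simp add: zeta_term_def powr_realpow)
  finally show ?thesis by (simp add: zeta_real_def)
qed

lemma infsum_zeta_term_tail_le:
  assumes "k \<ge> 2" "P \<ge> 1"
  shows "infsum (zeta_term k) {P<..} \<le> 1 / real P"
proof (rule infsum_le_finite_sums[OF zeta_term_summable_on[OF assms(1)]])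
  fix F assume F: "finite F" "F \<subseteq> {P<..}"
  show "sum (zeta_term k) F \<le> 1 / real P"
  proof (cases "F = {}")
    case False
    define M where "M = Max F"
    have FM: "F \<subseteq> {P<..M}" using F False by (auto simp: M_def)
    have "sum (zeta_term k) F \<le> sum (zeta_term k) {P<..M}"
      using FM by (intro sum_mono2) (auto simp: zeta_term_nonneg)
    also have "\<dots> \<le> (\<Sum>m\<in>{P<..M}. 1 / real m ^ 2)"
    proof (rule sum_mono)
      fix m assume "m \<in> {P<..M}"
      hence m: "real m \<ge> 1" using assms by simp
      hence "real m ^ 2 \<le> real m ^ k" using assms by (intro power_increasing) auto
      thus "zeta_term k m \<le> 1 / real m ^ 2" using m by (simp add: zeta_term_def frac_le)
    qed
    also have "\<dots> \<le> 1 / real P - 1 / real M"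
      using Max_in[OF F(1) False] F(2) assms(2)
      by (intro sum_inverse_squares_le) (auto simp: M_def)
    also have "\<dots> \<le> 1 / real P" by simp
    finally show ?thesis .
  qed simp
qed

definition rough :: "nat set \<Rightarrow> nat set" where
  "rough S = {n. n \<ge> 1 \<and> (\<forall>p\<in>S. \<not> p dvd n)}"

lemma mult_prime_in_rough:
  assumes "prime p" "p \<notin> S" "\<forall>q\<in>S. prime q" "m \<in> rough S"
  shows "p * m \<in> rough S"
proof -
  have "\<not> q dvd p * m" if "q \<in> S" for q
  proof -
    have "q \<noteq> p" using that assms(2) by auto
    hence "\<not> q dvd p" using assms(1,3) that primes_dvd_imp_eq by blast
    moreover have "\<not> q dvd m" using assms(4) that by (simp add: rough_def)
    ultimately show ?thesis using assms(3) that by (simp add: prime_dvd_mult_iff)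
  qed
  moreover have "p * m \<ge> 1"
    using assms(4) prime_gt_0_nat[OF assms(1)] by (simp add: rough_def Suc_le_eq)
  ultimately show ?thesis by (simp add: rough_def)
qed

lemma rough_insert_split:
  assumes "prime p" "p \<notin> S" "\<forall>q\<in>S. prime q"
  shows "rough S = rough (insert p S) \<union> (\<lambda>m. p * m) ` rough S"
    and "rough (insert p S) \<inter> (\<lambda>m. p * m) ` rough S = {}"
proof -
  show "rough (insert p S) \<inter> (\<lambda>m. p * m) ` rough S = {}"
    by (auto simp: rough_def)
  have "n \<in> rough (insert p S) \<union> (\<lambda>m. p * m) ` rough S" if n: "n \<in> rough S" for n
  proof (cases "p dvd n")
    case True
    then obtain m where m: "n = p * m" by (auto simp: dvd_def)
    have "m \<ge> 1" using n m by (cases m) (auto simp: rough_def)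
    moreover have "\<forall>q\<in>S. \<not> q dvd m" using n m by (auto simp: rough_def)
    ultimately have "m \<in> rough S" by (simp add: rough_def)
    thus ?thesis using m by blast
  next
    case False
    thus ?thesis using n by (auto simp: rough_def)
  qed
  moreover have "rough (insert p S) \<subseteq> rough S" by (auto simp: rough_def)
  moreover have "(\<lambda>m. p * m) ` rough S \<subseteq> rough S"
    using mult_prime_in_rough[OF assms] by (intro image_subsetI)
  ultimately show "rough S = rough (insert p S) \<union> (\<lambda>m. p * m) ` rough S"
    by (intro equalityI subsetI Un_least) auto
qed

lemma infsum_zeta_term_rough:
  assumes k: "k \<ge> 2" and "finite S" "\<forall>q\<in>S. prime q"
  shows "infsum (zeta_term k) (rough S) = (\<Prod>p\<in>S. 1 - 1 / real p ^ k) * infsum (zeta_term k) UNIV"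
  using assms(2,3)
proof (induction S rule: finite_induct)
  case empty
  have "infsum (zeta_term k) (rough {}) = infsum (zeta_term k) UNIV"
    by (rule infsum_cong_neutral) (use k in \<open>auto simp: rough_def zeta_term_def\<close>)
  thus ?case by simp
next
  case (insert p S)
  hence p: "prime p" and S: "\<forall>q\<in>S. prime q" by simp_all
  note split = rough_insert_split[OF p insert(2) S]
  note summable = zeta_term_summable_on[OF k]
  have "infsum (zeta_term k) (rough S)
      = infsum (zeta_term k) (rough (insert p S)) + infsum (zeta_term k) ((\<lambda>m. p * m) ` rough S)"
    by (subst split(1)) (rule infsum_Un_disjoint[OF summable summable split(2)])
  also have "infsum (zeta_term k) ((\<lambda>m. p * m) ` rough S)
      = infsum (zeta_term k \<circ> (\<lambda>m. p * m)) (rough S)"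
    using p by (intro infsum_reindex) (auto simp: inj_on_def prime_gt_0_nat)
  also have "zeta_term k \<circ> (\<lambda>m. p * m) = (\<lambda>m. (1 / real p ^ k) * zeta_term k m)"
    by (rule ext) (simp add: zeta_term_def power_mult_distrib)
  also have "infsum (\<lambda>m. (1 / real p ^ k) * zeta_term k m) (rough S)
      = (1 / real p ^ k) * infsum (zeta_term k) (rough S)"
    by (rule infsum_cmult_right[OF summable])
  finally have "infsum (zeta_term k) (rough S)
      = infsum (zeta_term k) (rough (insert p S)) + (1 / real p ^ k) * infsum (zeta_term k) (rough S)" .
  moreover have "(1 - 1 / real p ^ k) * infsum (zeta_term k) (rough S)
      = infsum (zeta_term k) (rough S) - (1 / real p ^ k) * infsum (zeta_term k) (rough S)"
    by (simp add: left_diff_distrib)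
  ultimately have "infsum (zeta_term k) (rough (insert p S))
      = (1 - 1 / real p ^ k) * infsum (zeta_term k) (rough S)"
    by linarith
  thus ?case using insert S by simp
qed

lemma rough_primes_atMost_subset: "rough {p. prime p \<and> p \<le> P} \<subseteq> insert 1 {P<..}"
proof
  fix n assume n: "n \<in> rough {p. prime p \<and> p \<le> P}"
  show "n \<in> insert 1 {P<..}"
  proof (rule ccontr)
    assume "n \<notin> insert 1 {P<..}"
    hence "n \<noteq> 1" "n \<le> P" by auto
    then obtain q where q: "prime q" "q dvd n" using prime_factor_nat[of n] by blast
    moreover have "q \<le> n" using q n by (intro dvd_imp_le) (auto simp: rough_def)
    ultimately show False using n \<open>n \<le> P\<close> by (auto simp: rough_def)
  qed
qed

lemma euler_partial_product_bounds:
  assumes k: "k \<ge> 2" and P: "P \<ge> 1"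
  defines "c \<equiv> (\<Prod>p\<in>{p. prime p \<and> p \<le> P}. 1 - 1 / real p ^ k)"
  shows "1 \<le> c * zeta_real (real k)" "c * zeta_real (real k) \<le> 1 + 1 / real P"
proof -
  note summable = zeta_term_summable_on[OF k]
  have eq: "infsum (zeta_term k) (rough {p. prime p \<and> p \<le> P}) = c * zeta_real (real k)"
    unfolding c_def zeta_real_eq_infsum[OF k] by (rule infsum_zeta_term_rough[OF k]) auto
  have "infsum (zeta_term k) {1} \<le> infsum (zeta_term k) (rough {p. prime p \<and> p \<le> P})"
    by (rule infsum_mono2[OF summable summable]) (auto simp: rough_def zeta_term_nonneg)
  thus "1 \<le> c * zeta_real (real k)" using eq by (simp add: zeta_term_def)
  have "infsum (zeta_term k) (rough {p. prime p \<and> p \<le> P}) \<le> infsum (zeta_term k) (insert 1 {P<..})"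
    by (rule infsum_mono2[OF summable summable rough_primes_atMost_subset]) (simp add: zeta_term_nonneg)
  also have "\<dots> = 1 + infsum (zeta_term k) {P<..}"
    using P by (subst infsum_insert[OF summable]) (auto simp: zeta_term_def)
  also have "\<dots> \<le> 1 + 1 / real P" using infsum_zeta_term_tail_le[OF k P] by simp
  finally show "c * zeta_real (real k) \<le> 1 + 1 / real P" using eq by simp
qed

section \<open>Sieving out \<open>k\<close>-th powers of small primes\<close>

lemma prime_powers_dvd_iff_prod_dvd:
  fixes n k :: nat
  assumes "finite X" "\<forall>p\<in>X. prime p"
  shows "(\<forall>p\<in>X. p ^ k dvd n) \<longleftrightarrow> (\<Prod>p\<in>X. p ^ k) dvd n"
  using assms
proof (induction X rule: finite_induct)
  case empty thus ?case by simp
next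
  case (insert p X)
  have IH: "(\<forall>p\<in>X. p ^ k dvd n) \<longleftrightarrow> (\<Prod>p\<in>X. p ^ k) dvd n" using insert by simp
  have cop: "coprime (p ^ k) (\<Prod>q\<in>X. q ^ k)"
  proof (rule prod_coprime_right)
    fix q assume q: "q \<in> X"
    have "p \<noteq> q" using q insert(2) by auto
    hence "coprime p q" using insert(4) q by (intro primes_coprime) auto
    thus "coprime (p ^ k) (q ^ k)" by simp
  qed
  have "(\<forall>p'\<in>insert p X. p' ^ k dvd n) \<longleftrightarrow> p ^ k dvd n \<and> (\<Prod>p\<in>X. p ^ k) dvd n" using IH by simp
  also have "\<dots> \<longleftrightarrow> p ^ k * (\<Prod>q\<in>X. q ^ k) dvd n"
  proof
    assume "p ^ k dvd n \<and> (\<Prod>p\<in>X. p ^ k) dvd n"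
    thus "p ^ k * (\<Prod>q\<in>X. q ^ k) dvd n" using cop by (intro divides_mult) auto
  next
    assume h: "p ^ k * (\<Prod>q\<in>X. q ^ k) dvd n"
    have "p ^ k dvd n" using h dvd_mult_left by blast
    moreover have "(\<Prod>q\<in>X. q ^ k) dvd n" using h dvd_mult_right by blast
    ultimately show "p ^ k dvd n \<and> (\<Prod>p\<in>X. p ^ k) dvd n" by simp
  qed
  also have "p ^ k * (\<Prod>q\<in>X. q ^ k) = (\<Prod>q\<in>insert p X. q ^ k)" using insert by simp
  finally show ?case .
qed

lemma prod_of_bool_prime_powers_dvd:
  fixes n k :: nat
  assumes "finite X" "\<forall>p\<in>X. prime p"
  shows "(\<Prod>p\<in>X. of_bool (p ^ k dvd n) :: real) = of_bool ((\<Prod>p\<in>X. p ^ k) dvd n)"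
proof -
  have "(\<Prod>p\<in>X. of_bool (p ^ k dvd n) :: real) = of_bool (\<forall>p\<in>X. p ^ k dvd n)"
    using assms(1) by (induction X rule: finite_induct) auto
  thus ?thesis using prime_powers_dvd_iff_prod_dvd[OF assms] by simp
qed

lemma of_bool_not_dvd_prime_powers_expand:
  fixes n k :: nat
  assumes "finite S" "\<forall>p\<in>S. prime p"
  shows "(of_bool (\<forall>p\<in>S. \<not> p ^ k dvd n) :: real)
    = (\<Sum>X\<in>Pow S. (-1) ^ card X * of_bool ((\<Prod>p\<in>X. p ^ k) dvd n))"
proof -
  have "(of_bool (\<forall>p\<in>S. \<not> p ^ k dvd n) :: real) = (\<Prod>p\<in>S. 1 - of_bool (p ^ k dvd n))"
    using assms(1) by (induction S rule: finite_induct) auto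
  also have "\<dots> = (\<Sum>X\<in>Pow S. (-1) ^ card X * (\<Prod>p\<in>X. of_bool (p ^ k dvd n)) * (\<Prod>p\<in>S - X. 1))"
    by (rule prod_diff_conv_sum[OF assms(1)])
  also have "\<dots> = (\<Sum>X\<in>Pow S. (-1) ^ card X * of_bool ((\<Prod>p\<in>X. p ^ k) dvd n))"
  proof (rule sum.cong[OF refl])
    fix X assume "X \<in> Pow S"
    hence "finite X" "\<forall>p\<in>X. prime p" using assms by (auto intro: finite_subset)
    thus "(-1) ^ card X * (\<Prod>p\<in>X. of_bool (p ^ k dvd n)) * (\<Prod>p\<in>S - X. 1)
        = (-1) ^ card X * (of_bool ((\<Prod>p\<in>X. p ^ k) dvd n) :: real)"
      by (simp add: prod_of_bool_prime_powers_dvd)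
  qed
  finally show ?thesis .
qed

lemma prod_one_minus_inverse_powers_expand:
  fixes x :: real and k :: nat and S :: "nat set"
  assumes "finite S"
  shows "x * (\<Prod>p\<in>S. 1 - 1 / real p ^ k)
    = (\<Sum>X\<in>Pow S. (-1) ^ card X * (x / real (\<Prod>p\<in>X. p ^ k)))"
proof -
  have "(\<Prod>p\<in>S. 1 - 1 / real p ^ k)
      = (\<Sum>X\<in>Pow S. (-1) ^ card X * (\<Prod>p\<in>X. 1 / real p ^ k) * (\<Prod>p\<in>S - X. 1))"
    by (rule prod_diff_conv_sum[OF assms])
  also have "\<dots> = (\<Sum>X\<in>Pow S. (-1) ^ card X / real (\<Prod>p\<in>X. p ^ k))"
    by (simp add: prod_dividef)
  finally show ?thesis by (simp add: sum_distrib_left field_simps)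
qed

text \<open>Legendre's sieve: inclusion--exclusion over the divisors \<open>\<Prod>p\<in>X. p ^ k\<close>, \<open>X \<subseteq> S\<close>.\<close>

lemma legendre_sieve_bound:
  fixes U S :: "nat set" and k :: nat and E x :: real
  assumes U: "finite U" and S: "finite S" "\<forall>p\<in>S. prime p"
    and E: "\<And>q. q \<ge> 1 \<Longrightarrow> \<bar>real (card {n\<in>U. q dvd n}) - x / real q\<bar> \<le> E"
  shows "\<bar>real (card {n\<in>U. \<forall>p\<in>S. \<not> p ^ k dvd n}) - x * (\<Prod>p\<in>S. 1 - 1 / real p ^ k)\<bar>
    \<le> 2 ^ card S * E"
proof -
  define d where "d = (\<lambda>X::nat set. \<Prod>p\<in>X. p ^ k)"
  have d: "d X \<ge> 1" if "X \<in> Pow S" for X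
    using that S(2) by (auto simp: d_def Suc_le_eq prime_gt_0_nat intro!: prod_pos)
  have "real (card {n\<in>U. \<forall>p\<in>S. \<not> p ^ k dvd n}) = (\<Sum>n\<in>U. of_bool (\<forall>p\<in>S. \<not> p ^ k dvd n))"
    using U by (simp add: Int_def)
  also have "\<dots> = (\<Sum>n\<in>U. \<Sum>X\<in>Pow S. (-1) ^ card X * of_bool (d X dvd n))"
    unfolding d_def using S by (simp add: of_bool_not_dvd_prime_powers_expand)
  also have "\<dots> = (\<Sum>X\<in>Pow S. (-1) ^ card X * real (card {n\<in>U. d X dvd n}))"
    using U by (subst sum.swap) (simp add: sum_distrib_left[symmetric] Int_def)
  finally have "real (card {n\<in>U. \<forall>p\<in>S. \<not> p ^ k dvd n}) - x * (\<Prod>p\<in>S. 1 - 1 / real p ^ k)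
      = (\<Sum>X\<in>Pow S. (-1) ^ card X * (real (card {n\<in>U. d X dvd n}) - x / real (d X)))"
    using prod_one_minus_inverse_powers_expand[OF S(1), of x k]
    by (simp add: d_def sum_subtractf[symmetric] algebra_simps)
  also have "\<bar>\<dots>\<bar> \<le> (\<Sum>X\<in>Pow S. \<bar>real (card {n\<in>U. d X dvd n}) - x / real (d X)\<bar>)"
    by (rule order_trans[OF sum_abs]) (simp add: abs_mult)
  also have "\<dots> \<le> (\<Sum>X\<in>Pow S. E)" using E d by (intro sum_mono) auto
  also have "\<dots> = 2 ^ card S * E" using S(1) by (simp add: card_Pow)
  finally show ?thesis .
qed

text \<open>A number that survives the sieve but is not \<open>k\<close>-free is divisible by \<open>p ^ k\<close> for a prime
  \<open>P < p \<le> N\<close>, and \<open>\<Sum>\<^sub>P\<^sub><\<^sub>m N / m\<^sup>2 \<le> N / P\<close>.\<close>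

lemma card_sieved_minus_kfree_le:
  fixes U :: "nat set" and N k P :: nat
  assumes U: "U \<subseteq> {1..N}" and k: "k \<ge> 2" and P: "P \<ge> 1"
  shows "card {n\<in>U. kfree k n} \<le> card {n\<in>U. \<forall>p\<in>{p. prime p \<and> p \<le> P}. \<not> p ^ k dvd n}"
    and "real (card {n\<in>U. \<forall>p\<in>{p. prime p \<and> p \<le> P}. \<not> p ^ k dvd n})
      - real (card {n\<in>U. kfree k n}) \<le> real N / real P"
proof -
  define A where "A = {n\<in>U. \<forall>p\<in>{p. prime p \<and> p \<le> P}. \<not> p ^ k dvd n}"
  define B where "B = {n\<in>U. kfree k n}"
  have fin: "finite U" using U by (rule finite_subset) simp
  have BA: "B \<subseteq> A" by (auto simp: A_def B_def kfree_def)
  thus "card {n\<in>U. kfree k n} \<le> card {n\<in>U. \<forall>p\<in>{p. prime p \<and> p \<le> P}. \<not> p ^ k dvd n}"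
    using fin unfolding A_def B_def by (intro card_mono) auto
  have "A - B \<subseteq> (\<Union>m\<in>{P<..N}. {n\<in>U. m ^ k dvd n})"
  proof
    fix n assume "n \<in> A - B"
    hence n: "n \<in> U" and sieved: "\<forall>p\<in>{p. prime p \<and> p \<le> P}. \<not> p ^ k dvd n"
      and "\<not> kfree k n" by (simp_all add: A_def B_def)
    then obtain p where p: "prime p" "p ^ k dvd n" by (auto simp: kfree_def)
    have "\<not> p \<le> P" using sieved p by blast
    have "p \<le> p ^ k" using prime_gt_1_nat[OF p(1)] k by (intro self_le_power) auto
    also have "p ^ k \<le> n" using p n U by (intro dvd_imp_le) auto
    finally have "p \<le> N" using n U by auto
    thus "n \<in> (\<Union>m\<in>{P<..N}. {n\<in>U. m ^ k dvd n})" using p n \<open>\<not> p \<le> P\<close> by auto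
  qed
  hence "card (A - B) \<le> card (\<Union>m\<in>{P<..N}. {n\<in>U. m ^ k dvd n})"
    using fin by (intro card_mono) auto
  also have "\<dots> \<le> (\<Sum>m\<in>{P<..N}. card {n\<in>U. m ^ k dvd n})" by (rule card_UN_le) simp
  finally have "real (card (A - B)) \<le> (\<Sum>m\<in>{P<..N}. real (card {n\<in>U. m ^ k dvd n}))"
    by (simp flip: of_nat_sum)
  also have "\<dots> \<le> (\<Sum>m\<in>{P<..N}. real N * (1 / real m ^ 2))"
  proof (rule sum_mono)
    fix m assume "m \<in> {P<..N}"
    hence m: "real m \<ge> 1" using P by simp
    have "real (card {n\<in>U. m ^ k dvd n}) \<le> real N / real (m ^ k)"
      using U m by (intro card_dvd_le_div) auto
    also have "\<dots> \<le> real N / real m ^ 2"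
      using m k by (simp add: divide_left_mono power_increasing)
    finally show "real (card {n\<in>U. m ^ k dvd n}) \<le> real N * (1 / real m ^ 2)" by simp
  qed
  also have "\<dots> \<le> real N * (1 / real P)"
  proof (cases "P \<le> N")
    case True
    have "(\<Sum>m\<in>{P<..N}. 1 / real m ^ 2) \<le> 1 / real P - 1 / real N"
      by (rule sum_inverse_squares_le[OF P True])
    also have "\<dots> \<le> 1 / real P" by simp
    finally have "real N * (\<Sum>m\<in>{P<..N}. 1 / real m ^ 2) \<le> real N * (1 / real P)"
      by (intro mult_left_mono) auto
    thus ?thesis by (simp add: sum_distrib_left)
  qed simp
  finally have "real (card (A - B)) \<le> real N / real P" by simp
  moreover have "finite A" using fin by (simp add: A_def)
  hence "card A = card B + card (A - B)"
    using card_Diff_subset[OF finite_subset[OF BA] BA] card_mono[OF _ BA] by simp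
  ultimately show "real (card {n\<in>U. \<forall>p\<in>{p. prime p \<and> p \<le> P}. \<not> p ^ k dvd n})
      - real (card {n\<in>U. kfree k n}) \<le> real N / real P"
    unfolding A_def B_def by simp
qed
section \<open>Counting \<open>k\<close>-free numbers\<close>

lemma zeta_real_ge_1:
  assumes "k \<ge> 2"
  shows "1 \<le> zeta_real (real k)"
proof -
  have "1 \<le> (\<Prod>p\<in>{p. prime p \<and> p \<le> 1}. 1 - 1 / real p ^ k) * zeta_real (real k)"
    by (rule euler_partial_product_bounds(1)[OF assms]) simp
  moreover have "{p::nat. prime p \<and> p \<le> 1} = {}" by (auto dest: prime_gt_1_nat)
  ultimately show ?thesis by (simp only:) simp
qed

lemma kfree_count_sieve_estimate:
  fixes U :: "nat set" and N k P :: nat and x E :: real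
  assumes U: "U \<subseteq> {1..N}" and k: "k \<ge> 2" and P: "P \<ge> 1" and x: "0 \<le> x" "x \<le> real N"
    and E: "\<And>q. q \<ge> 1 \<Longrightarrow> \<bar>real (card {n\<in>U. q dvd n}) - x / real q\<bar> \<le> E"
  shows "\<bar>real (card {n\<in>U. kfree k n}) - x / zeta_real (real k)\<bar> \<le> 2 * real N / real P + 2 ^ P * E"
proof -
  define S where "S = {p. prime p \<and> p \<le> P}"
  define c where "c = (\<Prod>p\<in>S. 1 - 1 / real p ^ k)"
  define Z where "Z = zeta_real (real k)"
  define KS where "KS = real (card {n\<in>U. \<forall>p\<in>S. \<not> p ^ k dvd n})"
  have fin: "finite U" using U by (rule finite_subset) simp
  have "S \<subseteq> {1..P}" by (auto simp: S_def dest: prime_gt_1_nat)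
  hence "card S \<le> P" using card_mono[of "{1..P}" S] by simp
  moreover have "0 \<le> E" using E[of 1] by linarith
  ultimately have "2 ^ card S * E \<le> 2 ^ P * E" by (intro mult_right_mono power_increasing) auto
  moreover have "\<bar>KS - x * c\<bar> \<le> 2 ^ card S * E"
    unfolding KS_def c_def by (rule legendre_sieve_bound[OF fin _ _ E]) (auto simp: S_def)
  ultimately have sieve: "\<bar>KS - x * c\<bar> \<le> 2 ^ P * E" by linarith
  have tail: "real (card {n\<in>U. kfree k n}) \<le> KS" "KS - real (card {n\<in>U. kfree k n}) \<le> real N / real P"
    using card_sieved_minus_kfree_le[OF U k P] by (simp_all add: KS_def S_def)
  have Z: "1 \<le> Z" using zeta_real_ge_1[OF k] by (simp add: Z_def)
  have cZ: "1 \<le> c * Z" "c * Z \<le> 1 + 1 / real P"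
    using euler_partial_product_bounds[OF k P] by (simp_all add: c_def Z_def S_def)
  have "(c * Z - 1) / Z \<le> c * Z - 1" using cZ Z by (simp add: divide_le_eq mult_le_cancel_left1)
  hence w: "0 \<le> (c * Z - 1) / Z" "(c * Z - 1) / Z \<le> 1 / real P" using cZ Z by simp_all
  have "0 \<le> x * ((c * Z - 1) / Z)" using x(1) w(1) by (rule mult_nonneg_nonneg)
  moreover have "x * ((c * Z - 1) / Z) \<le> x * (1 / real P)" using x w(2) by (intro mult_left_mono)
  moreover have "x * c - x / Z = x * ((c * Z - 1) / Z)" using Z by (simp add: field_simps)
  moreover have "x * (1 / real P) \<le> real N / real P" using x by (simp add: divide_right_mono)
  ultimately have "\<bar>x * c - x / Z\<bar> \<le> real N / real P" by linarith
  thus ?thesis using sieve tail by (simp add: Z_def abs_le_iff)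
qed

lemma mult_ln_le_powr:
  fixes x e :: real
  assumes "x \<ge> 1" "e > 0"
  shows "e * ln x \<le> x powr e"
proof -
  have "ln (x powr e) \<le> x powr e - 1" using assms by (intro ln_le_minus_one) simp
  thus ?thesis using assms by (simp add: ln_powr)
qed

text \<open>Balancing the two sieve errors \<open>N / P\<close> and \<open>2\<^sup>P N\<^sup>1\<^sup>-\<^sup>\<delta>\<close> with \<open>P \<approx> (\<delta> / 2) log\<^sub>2 N\<close>.\<close>

lemma sieve_level_choice:
  fixes \<delta> K N :: real
  assumes \<delta>: "\<delta> > 0" and K: "K \<ge> 0" and N: "2 powr (4 / \<delta>) \<le> N"
  obtains P :: nat where "P \<ge> 1"
    "2 * N / real P + 2 ^ P * (K * N powr (1 - \<delta>)) \<le> (2 * K + 8) / \<delta> * (N / ln N)"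
proof -
  have "1 < 2 powr (4 / \<delta>)" using \<delta> by simp
  hence N1: "1 < N" using N by linarith
  hence lnN: "0 < ln N" by simp
  define y where "y = \<delta> / 2 * log 2 N"
  have "4 / \<delta> \<le> log 2 N"
    using N N1 log_le_cancel_iff[of 2 "2 powr (4 / \<delta>)" N] by simp
  hence y: "2 \<le> y" using \<delta> by (simp add: y_def field_simps)
  define P where "P = nat \<lfloor>y\<rfloor>"
  have P: "real P \<le> y" "y - 1 < real P" using y by (simp_all add: P_def)
  have "ln N \<le> log 2 N"
    using lnN ln_le_minus_one[of 2] by (simp add: log_def le_divide_eq mult_le_cancel_left1)
  hence "\<delta> * ln N \<le> \<delta> * log 2 N" using \<delta> by (intro mult_left_mono) auto
  hence Plow: "\<delta> / 4 * ln N \<le> real P" using P y by (simp add: y_def)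
  have P1: "P \<ge> 1" using P y by linarith
  have "2 * N / real P \<le> 8 / \<delta> * (N / ln N)"
  proof -
    have "2 * N / real P \<le> 2 * N / (\<delta> / 4 * ln N)"
      using Plow \<delta> lnN N1 P1 by (intro divide_left_mono mult_pos_pos) auto
    thus ?thesis using \<delta> lnN P1 by (simp add: field_simps)
  qed
  moreover have "2 ^ P * (K * N powr (1 - \<delta>)) \<le> 2 * K / \<delta> * (N / ln N)"
  proof -
    have "(2::real) ^ P = 2 powr real P" by (simp add: powr_realpow)
    also have "\<dots> \<le> 2 powr y" using P by (intro powr_mono) auto
    also have "\<dots> = (2 powr log 2 N) powr (\<delta> / 2)" by (simp add: y_def powr_powr mult.commute)
    also have "\<dots> = N powr (\<delta> / 2)" using N1 by simp
    finally have "2 ^ P * (K * N powr (1 - \<delta>)) \<le> K * (N powr (\<delta> / 2) * N powr (1 - \<delta>))"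
      using K by (simp add: mult_right_mono mult_left_mono mult.left_commute)
    also have "N powr (\<delta> / 2) * N powr (1 - \<delta>) = N powr (1 - \<delta> / 2)"
      by (simp add: powr_add[symmetric])
    also have "\<dots> = N / N powr (\<delta> / 2)" using N1 by (simp add: powr_diff)
    also have "\<dots> \<le> N / (\<delta> / 2 * ln N)"
      using N1 \<delta> lnN mult_ln_le_powr[of N "\<delta> / 2"] by (intro divide_left_mono) auto
    finally have "2 ^ P * (K * N powr (1 - \<delta>)) \<le> K * (N / (\<delta> / 2 * ln N))"
      using K by (simp add: mult_left_mono)
    also have "\<dots> = 2 * K / \<delta> * (N / ln N)" using \<delta> lnN by (simp add: field_simps)
    finally show ?thesis .
  qed
  ultimately show ?thesis using that[OF P1] by (simp add: add_divide_distrib distrib_right)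
qed

lemma kfree_beatty_count_trivial:
  fixes \<alpha> \<beta> :: real and N k :: nat
  assumes "\<alpha> \<ge> 1" "k \<ge> 2"
  shows "\<bar>real (card {n \<in> beatty \<alpha> \<beta>. n \<le> N \<and> kfree k n}) - real N / (\<alpha> * zeta_real (real k))\<bar>
    \<le> real N"
proof -
  have "{n \<in> beatty \<alpha> \<beta>. n \<le> N \<and> kfree k n} \<subseteq> {1..N}" by (auto simp: beatty_def)
  hence "card {n \<in> beatty \<alpha> \<beta>. n \<le> N \<and> kfree k n} \<le> N"
    using card_mono[of "{1..N}"] by fastforce
  moreover have "1 \<le> \<alpha> * zeta_real (real k)"
    using mult_mono[of 1 \<alpha> 1 "zeta_real (real k)"] assms zeta_real_ge_1 by simp
  hence "0 \<le> real N / (\<alpha> * zeta_real (real k))" "real N / (\<alpha> * zeta_real (real k)) \<le> real N"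
    by (simp_all add: divide_le_eq mult_le_cancel_left1)
  ultimately show ?thesis by (simp add: abs_le_iff)
qed

lemma kfree_beatty_count_sieve:
  fixes \<alpha> \<beta> c T :: real and N k P :: nat
  assumes \<alpha>: "\<alpha> > 1" and c: "c > 0" and T: "T \<ge> 1"
    and dio: "\<And>n::nat. n \<ge> 1 \<Longrightarrow> c \<le> real n powr T * dist_int (\<alpha> * real n)"
    and k: "k \<ge> 2" and N: "N \<ge> 1" and P: "P \<ge> 1"
  shows "\<bar>real (card {n \<in> beatty \<alpha> \<beta>. n \<le> N \<and> kfree k n}) - real N / (\<alpha> * zeta_real (real k))\<bar>
    \<le> 2 * real N / real P + 2 ^ P * ((6 * c powr (-1/T) + 5) * real N powr (1 - 1 / (4 * T)))"
proof -
  define U where "U = {n \<in> beatty \<alpha> \<beta>. n \<le> N}"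
  have U: "U \<subseteq> {1..N}" by (auto simp: U_def beatty_def)
  have "\<bar>real (card {n\<in>U. q dvd n}) - (real N / \<alpha>) / real q\<bar>
      \<le> (6 * c powr (-1/T) + 5) * real N powr (1 - 1 / (4 * T))" if "q \<ge> 1" for q
  proof -
    have "{n\<in>U. q dvd n} = {n \<in> beatty \<alpha> \<beta>. n \<le> N \<and> q dvd n}" by (auto simp: U_def)
    thus ?thesis using beatty_dvd_count_discrepancy[OF \<alpha> c T dio that N, of \<beta>] by simp
  qed
  hence "\<bar>real (card {n\<in>U. kfree k n}) - (real N / \<alpha>) / zeta_real (real k)\<bar>
      \<le> 2 * real N / real P + 2 ^ P * ((6 * c powr (-1/T) + 5) * real N powr (1 - 1 / (4 * T)))"
    using \<alpha> by (intro kfree_count_sieve_estimate[OF U k P]) (auto simp: divide_le_eq mult_le_cancel_left1)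
  moreover have "{n\<in>U. kfree k n} = {n \<in> beatty \<alpha> \<beta>. n \<le> N \<and> kfree k n}" by (auto simp: U_def)
  ultimately show ?thesis by simp
qed

lemma kfree_beatty_count_O_N_over_ln:
  fixes \<alpha> :: real
  assumes \<alpha>: "\<alpha> > 1" and ft: "finite_type \<alpha>"
  obtains C where "C > 0"
    "\<And>\<beta> k N. k \<ge> 2 \<Longrightarrow> N \<ge> 3 \<Longrightarrow>
      \<bar>real (card {n \<in> beatty \<alpha> \<beta>. n \<le> N \<and> kfree k n}) - real N / (\<alpha> * zeta_real (real k))\<bar>
        \<le> C * real N / ln (real N)"
proof -
  obtain c T where c: "c > 0" and T: "T \<ge> 1"
    and dio: "\<And>n::nat. n \<ge> 1 \<Longrightarrow> c \<le> real n powr T * dist_int (\<alpha> * real n)"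
    using finite_type_diophantine[OF ft] by blast
  define \<delta> where "\<delta> = 1 / (4 * T)"
  define K where "K = 6 * c powr (-1/T) + 5"
  define N0 :: real where "N0 = 2 powr (4 / \<delta>)"
  define C where "C = (2 * K + 8) / \<delta> + ln N0"
  have \<delta>: "\<delta> > 0" using T by (simp add: \<delta>_def)
  have K: "K \<ge> 0" using c by (simp add: K_def)
  have "1 < N0" using \<delta> by (simp add: N0_def)
  hence C: "C > 0" and C_ge: "(2 * K + 8) / \<delta> \<le> C" "ln N0 \<le> C"
    using \<delta> K by (simp_all add: C_def add_pos_nonneg)
  have "\<bar>real (card {n \<in> beatty \<alpha> \<beta>. n \<le> N \<and> kfree k n}) - real N / (\<alpha> * zeta_real (real k))\<bar>
      \<le> C * real N / ln (real N)" if k: "k \<ge> 2" and N: "N \<ge> 3" for \<beta> k N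
  proof (cases "real N < N0")
    case True
    have "ln (real N) < ln N0" using True N \<open>1 < N0\<close> by (subst ln_less_cancel_iff) auto
    hence lnN: "0 < ln (real N)" "ln (real N) \<le> C" using N C_ge(2) by auto
    hence "real N * ln (real N) \<le> real N * C" by (intro mult_left_mono) auto
    hence "real N \<le> C * real N / ln (real N)" using lnN by (simp add: le_divide_eq mult.commute)
    with kfree_beatty_count_trivial[of \<alpha> k \<beta> N] \<alpha> k show ?thesis by simp
  next
    case False
    have lnN: "0 < ln (real N)" using N by simp
    obtain P where P: "P \<ge> 1" and level:
      "2 * real N / real P + 2 ^ P * (K * real N powr (1 - \<delta>))
        \<le> (2 * K + 8) / \<delta> * (real N / ln (real N))"
      using sieve_level_choice[OF \<delta> K, of "real N"] False by (auto simp: N0_def)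
    have "\<bar>real (card {n \<in> beatty \<alpha> \<beta>. n \<le> N \<and> kfree k n}) - real N / (\<alpha> * zeta_real (real k))\<bar>
        \<le> 2 * real N / real P + 2 ^ P * (K * real N powr (1 - \<delta>))"
      using kfree_beatty_count_sieve[OF \<alpha> c T dio k _ P, of N \<beta>] N by (simp add: K_def \<delta>_def)
    also note level
    also have "(2 * K + 8) / \<delta> * (real N / ln (real N)) \<le> C * (real N / ln (real N))"
      using C_ge(1) lnN by (intro mult_right_mono) auto
    finally show ?thesis by simp
  qed
  thus ?thesis using that C by blast
qed

theorem corollary2:
  fixes \<alpha> :: real
  assumes "\<alpha> > 1" and "\<alpha> \<notin> \<rat>" and "finite_type \<alpha>"
  shows "\<exists>C>0. \<forall>(\<beta>::real) (k::nat) (N::nat). k \<ge> 2 \<longrightarrow> N \<ge> 3 \<longrightarrow>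
     \<bar>real (card {n \<in> beatty \<alpha> \<beta>. n \<le> N \<and> kfree k n})
        - real N / (\<alpha> * zeta_real (real k))\<bar>
       \<le> C * real N * ln (ln (real N)) / ln (real N)"
proof -
  \<comment> \<open>Irrationality of \<open>\<alpha>\<close> is part of \<open>finite_type \<alpha>\<close>.\<close>
  obtain C where C: "C > 0" and bound: "\<And>\<beta> k N. k \<ge> 2 \<Longrightarrow> N \<ge> 3 \<Longrightarrow>
      \<bar>real (card {n \<in> beatty \<alpha> \<beta>. n \<le> N \<and> kfree k n}) - real N / (\<alpha> * zeta_real (real k))\<bar>
        \<le> C * real N / ln (real N)"
    using kfree_beatty_count_O_N_over_ln[OF assms(1,3)] by blast
  have "exp 1 < (3::real)" using e_less_272 by simp
  hence "ln (exp 1) < ln (3::real)" by (subst ln_less_cancel_iff) auto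
  hence lnln3: "0 < ln (ln (3::real))" by simp
  have "C * real N / ln (real N) \<le> C / ln (ln 3) * real N * ln (ln (real N)) / ln (real N)"
    if "N \<ge> 3" for N :: nat
  proof -
    have "ln (ln 3) \<le> ln (ln (real N))" using that by simp
    hence "C * real N \<le> C / ln (ln 3) * real N * ln (ln (real N))"
      using C lnln3 by (simp add: field_simps mult_left_mono)
    thus ?thesis by (rule divide_right_mono) (use that in simp)
  qed
  hence "\<forall>(\<beta>::real) (k::nat) (N::nat). k \<ge> 2 \<longrightarrow> N \<ge> 3 \<longrightarrow>
     \<bar>real (card {n \<in> beatty \<alpha> \<beta>. n \<le> N \<and> kfree k n}) - real N / (\<alpha> * zeta_real (real k))\<bar>
       \<le> C / ln (ln 3) * real N * ln (ln (real N)) / ln (real N)"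
    using bound order_trans by blast
  thus ?thesis using C lnln3 by (intro exI[of _ "C / ln (ln 3)"]) simp
qed

end
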